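(* For $n\ge1$ let $$p_n(t)=\sum_{\tau\in T_n}t^{\,n-v(\tau)},$$ where $v(\tau)$ is the number of internal vertices of $\tau$. This is the Poincaré polynomial of the Stasheff polytope $\mathcal K^{n-1}$, counting its cells by dimension. Let $$f^{\mathcal K}_t(x)=\sum_{n\ge1}(-1)^n p_n(t)\,x^n.$$ Then $$f^{\mathcal K}_t(x)=\frac{-(1+(2+t)x)+\sqrt{1+2(2+t)x+t^2x^2}}{2(1+t)x}.$$ Equivalently, $f^{\mathcal K}_t$ is the compositional inverse of $$f^{\Delta}_t(x)=\sum_{n\ge1}(-1)^n\frac{(1+t)^n-1}{t}\,x^n=\frac{-x}{(1+x)(1+(1+t)x)},$$ i.e. $f^{\Delta}_t(f^{\mathcal K}_t(x))=x$.
   Context: $T_n$ ($n\ge1$) is the set of planar rooted trees with $n+1$ leaves in which every internal vertex has at least two inputs. In particular, binary trees have $n$ internal vertices and the corolla has one. *)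

theory Defs
  imports "HOL-Computational_Algebra.Formal_Power_Series"
begin

datatype ptree = Leaf | Node "ptree list"

fun wf_ptree :: "ptree \<Rightarrow> bool" where
  "wf_ptree Leaf = True"
| "wf_ptree (Node ts) = (2 \<le> length ts \<and> (\<forall>s\<in>set ts. wf_ptree s))"

fun leaves :: "ptree \<Rightarrow> nat" where
  "leaves Leaf = 1"
| "leaves (Node ts) = sum_list (map leaves ts)"

fun ivert :: "ptree \<Rightarrow> nat" where
  "ivert Leaf = 0"
| "ivert (Node ts) = Suc (sum_list (map ivert ts))"

definition T :: "nat \<Rightarrow> ptree set" where
  "T n = {\<tau>. wf_ptree \<tau> \<and> leaves \<tau> = n + 1}"

definition poincare :: "nat \<Rightarrow> real \<Rightarrow> real" where
  "poincare n t = (\<Sum>\<tau>\<in>T n. t ^ (n - ivert \<tau>))"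

definition fK :: "real \<Rightarrow> real fps" where
  "fK t = Abs_fps (\<lambda>n. if n = 0 then 0 else (-1) ^ n * poincare n t)"

text \<open>The coefficient ((1+t)^n - 1)/t, written as the polynomial sum_{k<n} (1+t)^k
  so that it also makes sense at t = 0.\<close>
definition fDelta :: "real \<Rightarrow> real fps" where
  "fDelta t = Abs_fps (\<lambda>n. if n = 0 then 0 else (-1) ^ n * (\<Sum>k<n. (1 + t) ^ k))"

end

theory Submission
  imports Defs
begin

text \<open>
  Weight a tree by \<open>t ^ excess \<tau>\<close>, where \<open>excess \<tau> = leaves \<tau> - 1 - ivert \<tau>\<close>, so that
  \<open>p\<^sub>n(t)\<close> is the weighted count of trees with \<open>n + 1\<close> leaves. Splitting off the first
  subtree at the root, the series \<open>A\<close> of trees and \<open>F\<close> of nonempty forests (a forest of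
  \<open>k\<close> trees carrying an extra factor \<open>t ^ (k - 1)\<close>) satisfy \<open>A = x + A F\<close> and
  \<open>F = A + t A F\<close>, hence \<open>A = x + A (A + t (A - x))\<close>. Since \<open>A(-x) = -x (1 + f\<^sup>K)\<close>,
  this becomes the quadratic \<open>f\<^sup>K + x (1 + f\<^sup>K) (1 + (1 + t) f\<^sup>K) = 0\<close>, whose solution
  is the closed form. As \<open>f\<^sup>\<Delta> (1 + x) (1 + (1 + t) x) = -x\<close>, substituting \<open>f\<^sup>K\<close> into
  this identity and comparing with the quadratic gives \<open>f\<^sup>\<Delta> \<circ> f\<^sup>K = x\<close>.
\<close>

unbundle fps_syntax

fun excess :: "ptree \<Rightarrow> nat" where
  "excess Leaf = 0"
| "excess (Node ts) = sum_list (map excess ts) + length ts - 2"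

definition forest_excess :: "ptree list \<Rightarrow> nat" where
  "forest_excess ts = sum_list (map excess ts) + length ts - 1"

definition trees :: "nat \<Rightarrow> ptree set" where
  "trees m = {\<tau>. wf_ptree \<tau> \<and> leaves \<tau> = m}"

definition forests :: "nat \<Rightarrow> ptree list set" where
  "forests m = {ts. ts \<noteq> [] \<and> (\<forall>s\<in>set ts. wf_ptree s) \<and> sum_list (map leaves ts) = m}"

text \<open>The redundant index \<open>i = leaves a\<close> turns sums over \<open>splits m\<close> into convolutions.\<close>

definition splits :: "nat \<Rightarrow> (nat \<times> ptree \<times> ptree list) set" where
  "splits m = (SIGMA i:{..m}. trees i \<times> forests (m - i))"

lemma excess_ivert_leaves: "wf_ptree \<tau> \<Longrightarrow> excess \<tau> + ivert \<tau> + 1 = leaves \<tau>"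
proof (induction \<tau>)
  case (Node ts)
  then have "sum_list (map leaves ts) = sum_list (map (\<lambda>s. excess s + ivert s + 1) ts)"
    by (intro arg_cong[where f = sum_list] map_cong) auto
  also have "\<dots> = sum_list (map excess ts) + sum_list (map ivert ts) + length ts"
    by (induction ts) auto
  finally show ?case using Node.prems by auto
qed simp

lemma leaves_ge_1: "wf_ptree \<tau> \<Longrightarrow> 1 \<le> leaves \<tau>"
  using excess_ivert_leaves[of \<tau>] by simp

lemma excess_Node_Cons: "r \<noteq> [] \<Longrightarrow> excess (Node (a # r)) = excess a + forest_excess r"
  by (cases r) (auto simp: forest_excess_def)

lemma forest_excess_Cons: "r \<noteq> [] \<Longrightarrow> forest_excess (a # r) = Suc (excess a + forest_excess r)"
  by (cases r) (auto simp: forest_excess_def)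

lemma forest_excess_singleton [simp]: "forest_excess [a] = excess a"
  by (simp add: forest_excess_def)

lemma trees_0 [simp]: "trees 0 = {}"
  using leaves_ge_1 by (force simp: trees_def)

lemma forests_0 [simp]: "forests 0 = {}"
  using leaves_ge_1 by (fastforce simp: forests_def neq_Nil_conv)

lemma trees_decomp:
  "trees m = (if m = 1 then {Leaf} else {}) \<union> (\<lambda>(i, a, r). Node (a # r)) ` splits m"
proof (intro equalityI subsetI)
  fix \<tau> assume \<tau>: "\<tau> \<in> trees m"
  show "\<tau> \<in> (if m = 1 then {Leaf} else {}) \<union> (\<lambda>(i, a, r). Node (a # r)) ` splits m"
  proof (cases \<tau>)
    case (Node ts)
    with \<tau> obtain a r where ts: "ts = a # r" "r \<noteq> []"
      by (cases ts; cases "tl ts") (auto simp: trees_def)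
    with \<tau> Node have "(leaves a, a, r) \<in> splits m"
      by (auto simp: splits_def trees_def forests_def)
    then show ?thesis using Node ts by force
  qed (use \<tau> in \<open>simp add: trees_def\<close>)
qed (auto simp: trees_def splits_def forests_def Suc_le_eq split: if_splits)

lemma trees_1: "trees 1 = {Leaf}"
  by (subst trees_decomp) (auto simp: splits_def le_Suc_eq)

lemma forests_decomp:
  "forests m = (\<lambda>a. [a]) ` trees m \<union> (\<lambda>(i, a, r). a # r) ` splits m"
proof (intro equalityI subsetI)
  fix ts assume ts: "ts \<in> forests m"
  then obtain a r where ar: "ts = a # r"
    by (cases ts) (auto simp: forests_def)
  show "ts \<in> (\<lambda>a. [a]) ` trees m \<union> (\<lambda>(i, a, r). a # r) ` splits m"
  proof (cases "r = []")
    case False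
    with ts ar have "(leaves a, a, r) \<in> splits m"
      by (auto simp: splits_def trees_def forests_def)
    then show ?thesis using ar by force
  qed (use ts ar in \<open>auto simp: trees_def forests_def\<close>)
qed (auto simp: trees_def splits_def forests_def)

lemma inj_on_splits_Node: "inj_on (\<lambda>(i, a, r). Node (a # r)) (splits m)"
  by (auto simp: inj_on_def splits_def trees_def)

lemma inj_on_splits_Cons: "inj_on (\<lambda>(i, a, r). a # r) (splits m)"
  by (auto simp: inj_on_def splits_def trees_def)

lemma finite_trees_forests: "finite (trees m) \<and> finite (forests m)"
proof (induction m rule: less_induct)
  case (less m)
  have "finite (trees i \<times> forests (m - i))" if "i \<le> m" for i
    using less that by (cases "i = 0 \<or> i = m") auto
  then have "finite (splits m)"
    by (auto simp: splits_def intro: finite_SigmaI)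
  then have "finite (trees m)"
    by (subst trees_decomp) auto
  with \<open>finite (splits m)\<close> show ?case
    by (subst forests_decomp) auto
qed

lemma finite_splits: "finite (splits m)"
  using finite_trees_forests by (auto simp: splits_def intro: finite_SigmaI)

definition tree_fps :: "'a::comm_ring_1 \<Rightarrow> 'a fps" where
  "tree_fps t = Abs_fps (\<lambda>m. \<Sum>\<tau>\<in>trees m. t ^ excess \<tau>)"

definition forest_fps :: "'a::comm_ring_1 \<Rightarrow> 'a fps" where
  "forest_fps t = Abs_fps (\<lambda>m. \<Sum>ts\<in>forests m. t ^ forest_excess ts)"

lemma sum_splits_eq_mult_nth:
  "(\<Sum>(i, a, r)\<in>splits m. t ^ excess a * t ^ forest_excess r) = (tree_fps t * forest_fps t) $ m"
proof -
  have "(\<Sum>(i, a, r)\<in>splits m. t ^ excess a * t ^ forest_excess r)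
      = (\<Sum>i\<le>m. \<Sum>(a, r)\<in>trees i \<times> forests (m - i). t ^ excess a * t ^ forest_excess r)"
    unfolding splits_def using finite_trees_forests
    by (subst sum.Sigma) (auto simp: case_prod_unfold)
  also have "\<dots> = (tree_fps t * forest_fps t) $ m"
    by (simp add: fps_mult_nth tree_fps_def forest_fps_def atLeast0AtMost
        sum_product sum.cartesian_product)
  finally show ?thesis .
qed

lemma tree_fps_eq: "tree_fps t = fps_X + tree_fps t * forest_fps t"
proof (rule fps_ext)
  fix m
  let ?w = "\<lambda>\<tau>. t ^ excess \<tau>"
  have "tree_fps t $ m = (\<Sum>\<tau>\<in>trees m. ?w \<tau>)"
    by (simp add: tree_fps_def)
  also have "\<dots> = (\<Sum>\<tau>\<in>(if m = 1 then {Leaf} else {}). ?w \<tau>)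
      + (\<Sum>\<tau>\<in>(\<lambda>(i, a, r). Node (a # r)) ` splits m. ?w \<tau>)"
    using finite_splits by (subst trees_decomp) (rule sum.union_disjoint; auto)
  also have "(\<Sum>\<tau>\<in>(if m = 1 then {Leaf} else {}). ?w \<tau>) = fps_X $ m"
    by (auto simp: fps_X_def)
  also have "(\<Sum>\<tau>\<in>(\<lambda>(i, a, r). Node (a # r)) ` splits m. ?w \<tau>)
      = (\<Sum>(i, a, r)\<in>splits m. t ^ excess a * t ^ forest_excess r)"
    by (subst sum.reindex[OF inj_on_splits_Node], intro sum.cong)
      (auto simp: splits_def forests_def excess_Node_Cons power_add simp del: excess.simps)
  finally show "tree_fps t $ m = (fps_X + tree_fps t * forest_fps t) $ m"
    by (simp add: sum_splits_eq_mult_nth)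
qed

lemma forest_fps_eq: "forest_fps t = tree_fps t + fps_const t * (tree_fps t * forest_fps t)"
proof (rule fps_ext)
  fix m
  have "forest_fps t $ m = (\<Sum>ts\<in>forests m. t ^ forest_excess ts)"
    by (simp add: forest_fps_def)
  also have "\<dots> = (\<Sum>ts\<in>(\<lambda>a. [a]) ` trees m. t ^ forest_excess ts)
      + (\<Sum>ts\<in>(\<lambda>(i, a, r). a # r) ` splits m. t ^ forest_excess ts)"
    using finite_splits finite_trees_forests
    by (subst forests_decomp) (auto intro: sum.union_disjoint simp: splits_def forests_def)
  also have "(\<Sum>ts\<in>(\<lambda>a. [a]) ` trees m. t ^ forest_excess ts) = tree_fps t $ m"
    by (subst sum.reindex) (auto simp: inj_on_def tree_fps_def)
  also have "(\<Sum>ts\<in>(\<lambda>(i, a, r). a # r) ` splits m. t ^ forest_excess ts)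
      = t * (\<Sum>(i, a, r)\<in>splits m. t ^ excess a * t ^ forest_excess r)"
    by (subst sum.reindex[OF inj_on_splits_Cons], subst sum_distrib_left, intro sum.cong)
      (auto simp: splits_def forests_def forest_excess_Cons power_add)
  finally show "forest_fps t $ m = (tree_fps t + fps_const t * (tree_fps t * forest_fps t)) $ m"
    by (simp add: sum_splits_eq_mult_nth)
qed

lemma tree_fps_quadratic:
  "tree_fps t = fps_X + tree_fps t * (tree_fps t + fps_const t * (tree_fps t - fps_X))"
proof -
  have "tree_fps t * forest_fps t = tree_fps t - fps_X"
    using tree_fps_eq[of t] by (metis add_diff_cancel_left')
  then have "forest_fps t = tree_fps t + fps_const t * (tree_fps t - fps_X)"
    using forest_fps_eq[of t] by simp
  then show ?thesis
    using tree_fps_eq[of t] by simp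
qed

lemma poincare_eq_tree_fps_nth: "poincare n t = tree_fps t $ Suc n"
proof -
  have "n - ivert \<tau> = excess \<tau>" if "\<tau> \<in> trees (Suc n)" for \<tau>
    using that excess_ivert_leaves[of \<tau>] by (simp add: trees_def)
  then show ?thesis
    by (simp add: poincare_def tree_fps_def T_def trees_def)
qed

lemma tree_fps_reflect: "tree_fps t oo - fps_X = - fps_X * (1 + fK t)"
proof (rule fps_ext)
  fix n
  show "(tree_fps t oo - fps_X) $ n = (- fps_X * (1 + fK t)) $ n"
  proof (cases n)
    case 0
    then show ?thesis by (simp add: fps_compose_uminus' tree_fps_def)
  next
    case (Suc k)
    have "tree_fps t $ 1 = 1"
      using trees_1 by (simp add: tree_fps_def)
    with Suc show ?thesis
      by (cases k) (simp_all add: fps_compose_uminus' fK_def poincare_eq_tree_fps_nth)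
  qed
qed

lemma fK_quadratic: "fK t + fps_X * (1 + fK t) * (1 + fps_const (1 + t) * fK t) = 0"
proof -
  define B where "B = tree_fps t oo - fps_X"
  have "B = - fps_X + B * (B + fps_const t * (B + fps_X))"
    using arg_cong[OF tree_fps_quadratic[of t], of "\<lambda>f. f oo - fps_X"]
    by (simp add: B_def fps_compose_add_distrib fps_compose_mult_distrib fps_compose_sub_distrib
        fps_compose_uminus)
  moreover have "B = - fps_X * (1 + fK t)"
    unfolding B_def by (rule tree_fps_reflect)
  ultimately have "fps_X * (fK t + fps_X * (1 + fK t) * (1 + (1 + fps_const t) * fK t)) = 0"
    by algebra
  then show ?thesis
    by (simp add: fps_const_add[symmetric])
qed

lemma fK_closed_form:
  assumes "t \<noteq> -1"
  shows "fK t = (- (1 + fps_const (2 + t) * fps_X)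
                  + fps_radical (\<lambda>k a. root k a) 2
                      (1 + fps_const (2 * (2 + t)) * fps_X + fps_const (t ^ 2) * fps_X ^ 2))
                 / (fps_const (2 * (1 + t)) * fps_X)"
proof -
  define b :: "real fps" where
    "b = 1 + fps_const (2 * (2 + t)) * fps_X + fps_const (t ^ 2) * fps_X ^ 2"
  define S where "S = 1 + fps_const (2 + t) * fps_X + fps_const (2 * (1 + t)) * fps_X * fK t"
  have const_eqs: "fps_const (2 + t) = 2 + fps_const t" "fps_const (1 + t) = 1 + fps_const t"
    "fps_const (2 * (2 + t)) = 2 * (2 + fps_const t)" "fps_const (2 * (1 + t)) = 2 * (1 + fps_const t)"
    "fps_const (t ^ 2) = fps_const t ^ 2"
    by (simp_all flip: fps_const_add fps_const_mult fps_const_power numeral_fps_const)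
  have "S ^ 2 = b"
    using fK_quadratic[of t] unfolding S_def b_def const_eqs by algebra
  then have S: "S = fps_radical (\<lambda>k a. root k a) 2 b"
    using radical_unique[of "\<lambda>k a. root k a" 1 b S]
    by (simp add: S_def b_def numeral_2_eq_2)
  have "- (1 + fps_const (2 + t) * fps_X) + S = fK t * (fps_const (2 * (1 + t)) * fps_X)"
    by (simp add: S_def algebra_simps)
  moreover have "fps_const (2 * (1 + t)) * fps_X \<noteq> (0 :: real fps)"
    using assms by simp
  ultimately have "fK t = (- (1 + fps_const (2 + t) * fps_X) + S) / (fps_const (2 * (1 + t)) * fps_X)"
    by simp
  then show ?thesis
    unfolding S b_def .
qed

lemma geometric_fps_mult:
  "Abs_fps (\<lambda>n. c ^ n) * (1 - fps_const c * fps_X) = (1 :: 'a::comm_ring_1 fps)"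
proof (rule fps_ext)
  fix n
  show "(Abs_fps (\<lambda>n. c ^ n) * (1 - fps_const c * fps_X)) $ n = (1 :: 'a fps) $ n"
    by (cases n) (simp_all add: algebra_simps)
qed

lemma fDelta_nth: "fDelta t $ n = (- 1) ^ n * (\<Sum>k<n. (1 + t) ^ k)"
  by (simp add: fDelta_def)

lemma fDelta_mult_1_plus_X: "fDelta t * (1 + fps_X) = - fps_X * Abs_fps (\<lambda>n. (- (1 + t)) ^ n)"
proof (rule fps_ext)
  fix n
  show "(fDelta t * (1 + fps_X)) $ n = (- fps_X * Abs_fps (\<lambda>n. (- (1 + t)) ^ n)) $ n"
  proof (cases n)
    case (Suc m)
    then show ?thesis
      by (simp add: fps_mult_right_fps_X_plus_1_nth fDelta_nth distrib_left
          flip: power_minus[of "1 + t", simplified])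
  qed (simp add: fDelta_nth)
qed

lemma fDelta_mult_denominator:
  "fDelta t * ((1 + fps_X) * (1 + fps_const (1 + t) * fps_X)) = - fps_X"
proof -
  have "1 + fps_const (1 + t) * fps_X = 1 - fps_const (- (1 + t)) * fps_X"
    by (simp only: fps_const_neg [symmetric] mult_minus_left diff_minus_eq_add)
  then have "fDelta t * ((1 + fps_X) * (1 + fps_const (1 + t) * fps_X))
      = - fps_X * (Abs_fps (\<lambda>n. (- (1 + t)) ^ n) * (1 - fps_const (- (1 + t)) * fps_X))"
    by (simp only: mult.assoc [symmetric] fDelta_mult_1_plus_X)
  then show ?thesis
    by (simp only: geometric_fps_mult mult_1_right)
qed

lemma fDelta_closed_form: "fDelta t = - fps_X / ((1 + fps_X) * (1 + fps_const (1 + t) * fps_X))"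
proof -
  have "(1 + fps_X) * (1 + fps_const (1 + t) * fps_X) \<noteq> (0 :: real fps)"
    by (rule fps_nonzeroI[of _ 0]) simp
  then show ?thesis
    using fDelta_mult_denominator[of t] by (metis nonzero_mult_div_cancel_right)
qed

lemma fDelta_compose_fK: "fDelta t oo fK t = fps_X"
proof -
  define K where "K = fK t"
  define Q where "Q = (1 + K) * (1 + fps_const (1 + t) * K)"
  have K0: "K $ 0 = 0"
    by (simp add: K_def fK_def)
  have "(fDelta t oo K) * Q = - K"
    using arg_cong[OF fDelta_mult_denominator[of t], of "\<lambda>f. f oo K"] K0
    by (simp add: Q_def fps_compose_mult_distrib fps_compose_add_distrib fps_compose_uminus)
  also have "- K = fps_X * Q"
    using fK_quadratic[of t] unfolding K_def Q_def mult.assoc by (metis add_eq_0_iff)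
  finally have "(fDelta t oo K) * Q = fps_X * Q" .
  moreover have "Q \<noteq> 0"
    using K0 by (intro fps_nonzeroI[of _ 0]) (simp add: Q_def)
  ultimately show ?thesis
    unfolding K_def by simp
qed

theorem corollary4p4:
  fixes t :: real
  shows "(t \<noteq> -1 \<longrightarrow>
           fK t = (- (1 + fps_const (2 + t) * fps_X)
                   + fps_radical (\<lambda>k a. root k a) 2 (1 + fps_const (2 * (2 + t)) * fps_X + fps_const (t ^ 2) * fps_X ^ 2))
                  / (fps_const (2 * (1 + t)) * fps_X))
       \<and> fDelta t = - fps_X / ((1 + fps_X) * (1 + fps_const (1 + t) * fps_X))
       \<and> fps_compose (fDelta t) (fK t) = fps_X"
  using fK_closed_form fDelta_closed_form fDelta_compose_fK by blast

end
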